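(* Consider the data sharing game with $n\ge 2$ participants $N=\{1,\dots,n\}$ whose true datasets are $D=(D_1,\dots,D_n)$, and fix $\epsilon\ge 0$. Suppose a mechanism assigns to every input profile $\hat D=(\hat D_1,\dots,\hat D_n)$ a surplus vector $\pi(\hat D)=(\pi_0(\hat D),\dots,\pi_n(\hat D))$ lying in the strong $\epsilon$-core of the game $w_{\hat D}$, and pays participant $i$ the core payment $p_i(\hat D)=\pi_i(\hat D)-v_i(F(\hat D),\hat D_i)$. Assume that the VCG-like payment rule is incentive compatible, i.e. for every $i\in N$ and every dataset $\hat D_i$, $$v_i(F(D),D_i)+p_i^{VCG}(D)\ \ge\ v_i(F(\hat D_i\cup D_{-i}),D_i)+p_i^{VCG}(\hat D_i\cup D_{-i}).$$ Then for every $i\in N$ and every dataset $\hat D_i$, $$\Big(v_i(F(\hat D_i\cup D_{-i}),D_i)+p_i(\hat D_i\cup D_{-i})\Big)-\Big(v_i(F(D),D_i)+p_i(D)\Big)\ \le\ p_i^{VCG}(D)-p_i(D)+\epsilon,$$ i.e. the amount player $i$ can gain by deviating from truthful input is at most $p_i^{VCG}(D)-p_i(D)+\epsilon$.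
   Context: $F$ maps a collection of datasets to a global model, $A$ is an accuracy metric, $h_i=k_iA$ with $k_i>0$, and for a model $M$ and dataset $E$ the valuation is $v_i(M,E)=\mathbb{E}[\max\{h_i(M)-h_i(F(E)),0\}]$. For an input profile $\hat D$, $\hat D_S=\{\hat D_i\}_{i\in S}$, $\hat D_{-i}=\hat D_{N\setminus\{i\}}$, and $\hat D_i\cup D_{-i}$ denotes the profile in which participant $i$ inputs $\hat D_i$ and every $j\ne i$ inputs $D_j$. The server has budget $b_0$. The characteristic function of profile $\hat D$ is $w_{\hat D}(S)=\sum_{i\in S}v_i(F(\hat D_S),\hat D_i)+b_0$ for nonempty $S\subseteq N$ and $w_{\hat D}(\emptyset)=0$. Its strong $\epsilon$-core is $\{(\pi_0,\dots,\pi_n)\in\mathbb{R}^{n+1}_+:\sum_{i\in N}\pi_i+\pi_0=w_{\hat D}(N),\ \sum_{i\in S}\pi_i+\pi_0\ge w_{\hat D}(S)-\epsilon \ \forall S\in 2^N\setminus\{\emptyset\}\}$. The VCG-like payment is $p_i^{VCG}(\hat D)=\sum_{j\ne i}v_j(F(\hat D),\hat D_j)-\sum_{j\ne i}v_j(F(\hat D_{-i}),\hat D_j)$. The utility of participant $i$ (true dataset $D_i$) under input $\hat D$ and payment $q_i$ is $v_i(F(\hat D),D_i)+q_i$. *)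

theory Defs
  imports "HOL-Probability.Probability" "HOL-Library.Multiset"
begin

text \<open>Participants are N = {1..n}; index 0 is the server.
  A dataset profile is a function nat => 'd (only values on {1..n} matter).
  The accuracy A M w of model M is a random variable over a probability space P
  (the expectation in the valuation is taken w.r.t. P); h_i = k_i * A.\<close>

definition val :: "'w measure \<Rightarrow> ('d multiset \<Rightarrow> 'm) \<Rightarrow> ('m \<Rightarrow> 'w \<Rightarrow> real)
    \<Rightarrow> (nat \<Rightarrow> real) \<Rightarrow> nat \<Rightarrow> 'm \<Rightarrow> 'd \<Rightarrow> real" where
  "val P F A k i M E = (\<integral>\<omega>. max (k i * A M \<omega> - k i * A (F {#E#}) \<omega>) 0 \<partial>P)"

definition coll :: "(nat \<Rightarrow> 'd) \<Rightarrow> nat set \<Rightarrow> 'd multiset" where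
  "coll Dh S = image_mset Dh (mset_set S)"

definition charw :: "'w measure \<Rightarrow> ('d multiset \<Rightarrow> 'm) \<Rightarrow> ('m \<Rightarrow> 'w \<Rightarrow> real)
    \<Rightarrow> (nat \<Rightarrow> real) \<Rightarrow> real \<Rightarrow> (nat \<Rightarrow> 'd) \<Rightarrow> nat set \<Rightarrow> real" where
  "charw P F A k b0 Dh S =
     (if S = {} then 0 else (\<Sum>i\<in>S. val P F A k i (F (coll Dh S)) (Dh i)) + b0)"

definition strong_eps_core :: "(nat set \<Rightarrow> real) \<Rightarrow> nat \<Rightarrow> real \<Rightarrow> (nat \<Rightarrow> real) set" where
  "strong_eps_core wgame n \<epsilon> =
     {\<pi>. (\<forall>j\<in>{0..n}. 0 \<le> \<pi> j) \<and>
          (\<Sum>i\<in>{1..n}. \<pi> i) + \<pi> 0 = wgame {1..n} \<and>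
          (\<forall>S. S \<subseteq> {1..n} \<and> S \<noteq> {} \<longrightarrow> (\<Sum>i\<in>S. \<pi> i) + \<pi> 0 \<ge> wgame S - \<epsilon>)}"

definition pVCG :: "'w measure \<Rightarrow> ('d multiset \<Rightarrow> 'm) \<Rightarrow> ('m \<Rightarrow> 'w \<Rightarrow> real)
    \<Rightarrow> (nat \<Rightarrow> real) \<Rightarrow> nat \<Rightarrow> (nat \<Rightarrow> 'd) \<Rightarrow> nat \<Rightarrow> real" where
  "pVCG P F A k n Dh i =
     (\<Sum>j\<in>{1..n} - {i}. val P F A k j (F (coll Dh {1..n})) (Dh j))
   - (\<Sum>j\<in>{1..n} - {i}. val P F A k j (F (coll Dh ({1..n} - {i}))) (Dh j))"

definition pcore :: "'w measure \<Rightarrow> ('d multiset \<Rightarrow> 'm) \<Rightarrow> ('m \<Rightarrow> 'w \<Rightarrow> real)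
    \<Rightarrow> (nat \<Rightarrow> real) \<Rightarrow> nat \<Rightarrow> ((nat \<Rightarrow> 'd) \<Rightarrow> nat \<Rightarrow> real) \<Rightarrow> (nat \<Rightarrow> 'd) \<Rightarrow> nat \<Rightarrow> real" where
  "pcore P F A k n \<pi> Dh i = \<pi> Dh i - val P F A k i (F (coll Dh {1..n})) (Dh i)"

end

theory Submission
  imports Defs
begin

text \<open>In a strong \<open>\<epsilon>\<close>-core, player \<open>i\<close> receives at most its marginal contribution
  \<open>w(N) - w(N - {i}) + \<epsilon>\<close> (the coalition \<open>N - {i}\<close> is nonempty because \<open>n \<ge> 2\<close>), and in
  the data sharing game this marginal contribution is exactly \<open>v\<^sub>i(F(D), D\<^sub>i) + p\<^sub>i\<^sup>V\<^sup>C\<^sup>G(D)\<close>.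
  So at every profile the core payment exceeds the VCG-like payment by at most \<open>\<epsilon>\<close>. Applied at
  the deviating profile, the deviation utility is at most its VCG utility plus \<open>\<epsilon>\<close>, which
  incentive compatibility of VCG bounds by the truthful VCG utility.\<close>

lemma strong_eps_core_le_marginal:
  assumes core: "\<pi> \<in> strong_eps_core w n \<epsilon>"
    and i: "i \<in> {1..n}" and others: "{1..n} - {i} \<noteq> {}"
  shows "\<pi> i \<le> w {1..n} - w ({1..n} - {i}) + \<epsilon>"
proof -
  have total: "(\<Sum>j\<in>{1..n}. \<pi> j) + \<pi> 0 = w {1..n}"
    and coalition: "(\<Sum>j\<in>{1..n} - {i}. \<pi> j) + \<pi> 0 \<ge> w ({1..n} - {i}) - \<epsilon>"
    using core others unfolding strong_eps_core_def by auto
  have "(\<Sum>j\<in>{1..n}. \<pi> j) = \<pi> i + (\<Sum>j\<in>{1..n} - {i}. \<pi> j)"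
    using i by (simp add: sum.remove)
  with total coalition show ?thesis by linarith
qed

lemma charw_marginal_eq_val_plus_pVCG:
  assumes i: "i \<in> {1..n}" and others: "{1..n} - {i} \<noteq> {}"
  shows "charw P F A k b0 Dh {1..n} - charw P F A k b0 Dh ({1..n} - {i})
    = val P F A k i (F (coll Dh {1..n})) (Dh i) + pVCG P F A k n Dh i"
proof -
  have "{1..n} \<noteq> {}" using i by auto
  moreover have "(\<Sum>j\<in>{1..n}. val P F A k j (F (coll Dh {1..n})) (Dh j))
    = val P F A k i (F (coll Dh {1..n})) (Dh i)
      + (\<Sum>j\<in>{1..n} - {i}. val P F A k j (F (coll Dh {1..n})) (Dh j))"
    using i by (simp add: sum.remove)
  ultimately show ?thesis
    using others unfolding charw_def pVCG_def by simp
qed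

lemma pcore_le_pVCG_plus_eps:
  assumes core: "\<pi> Dh \<in> strong_eps_core (charw P F A k b0 Dh) n \<epsilon>"
    and n: "n \<ge> 2" and i: "i \<in> {1..n}"
  shows "pcore P F A k n \<pi> Dh i \<le> pVCG P F A k n Dh i + \<epsilon>"
proof -
  have "(if i = 1 then 2 else 1) \<in> {1..n} - {i}"
    using n by auto
  then have others: "{1..n} - {i} \<noteq> {}" by blast
  show ?thesis
    using strong_eps_core_le_marginal[OF core i others]
      charw_marginal_eq_val_plus_pVCG[OF i others, of P F A k b0 Dh]
    unfolding pcore_def by linarith
qed

theorem theorem4:
  fixes P :: "'w measure" and F :: "'d multiset \<Rightarrow> 'm" and A :: "'m \<Rightarrow> 'w \<Rightarrow> real"
    and k :: "nat \<Rightarrow> real" and b0 \<epsilon> :: real and n :: nat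
    and D :: "nat \<Rightarrow> 'd" and \<pi> :: "(nat \<Rightarrow> 'd) \<Rightarrow> nat \<Rightarrow> real"
  assumes "prob_space P"
    and "\<forall>i\<in>{1..n}. 0 < k i"
    and "n \<ge> 2"
    and "\<epsilon> \<ge> 0"
    and core: "\<forall>Dh. \<pi> Dh \<in> strong_eps_core (charw P F A k b0 Dh) n \<epsilon>"
    and IC: "\<forall>i\<in>{1..n}. \<forall>Di.
        val P F A k i (F (coll D {1..n})) (D i) + pVCG P F A k n D i
        \<ge> val P F A k i (F (coll (D(i := Di)) {1..n})) (D i) + pVCG P F A k n (D(i := Di)) i"
  shows "\<forall>i\<in>{1..n}. \<forall>Di.
        (val P F A k i (F (coll (D(i := Di)) {1..n})) (D i) + pcore P F A k n \<pi> (D(i := Di)) i)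
      - (val P F A k i (F (coll D {1..n})) (D i) + pcore P F A k n \<pi> D i)
      \<le> pVCG P F A k n D i - pcore P F A k n \<pi> D i + \<epsilon>"
proof (intro ballI allI)
  fix i Di assume i: "i \<in> {1..n}"
  have "pcore P F A k n \<pi> (D(i := Di)) i \<le> pVCG P F A k n (D(i := Di)) i + \<epsilon>"
    using pcore_le_pVCG_plus_eps[OF core[rule_format] \<open>n \<ge> 2\<close> i] .
  moreover have "val P F A k i (F (coll (D(i := Di)) {1..n})) (D i) + pVCG P F A k n (D(i := Di)) i
      \<le> val P F A k i (F (coll D {1..n})) (D i) + pVCG P F A k n D i"
    using IC i by blast
  ultimately show "(val P F A k i (F (coll (D(i := Di)) {1..n})) (D i) + pcore P F A k n \<pi> (D(i := Di)) i)
      - (val P F A k i (F (coll D {1..n})) (D i) + pcore P F A k n \<pi> D i)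
      \<le> pVCG P F A k n D i - pcore P F A k n \<pi> D i + \<epsilon>"
    by linarith
qed

end
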